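(* For every finite binary word $a_1a_2\cdots a_n$ (with $a_i\in\{0,1\}$) one has $$\omega(a_1a_2\cdots a_n)\equiv\sum_{i=1}^n(-1)^ia_i \pmod 3.$$
   Context: The weight $\omega$ is defined on finite binary words (paths in the infinite rooted planar binary tree, $0$ = left edge, $1$ = right edge) as the color of the region immediately to the left of the vertex $z$. The coloring is the proper $3$-coloring by $\mathbb{Z}_3=\{0,1,2\}$ of the complement of the tree (drawn in the upper half plane with a root edge) in which the regions to the left of, to the right of and below the root are colored $0,1,2$. Equivalently, attach to each word $z$ a triple $(L(z),R(z),B(z))$ with - $(L,R,B)(\emptyset)=(0,1,2)$, - $(L,R,B)(z0)=(L(z),B(z),R(z))$, - $(L,R,B)(z1)=(B(z),R(z),L(z))$, and set $\omega(z)=L(z)$. *)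

theory Defs
  imports Main
begin

text \<open>Binary words are lists of naturals with letters in {0,1}; the first letter
of the word is the head of the list. Colours in Z_3 are represented by
integers taken mod 3 (values in {0,1,2}).\<close>

fun step :: "int \<times> int \<times> int \<Rightarrow> nat \<Rightarrow> int \<times> int \<times> int" where
  "step (L, R, B) a = (if a = 0 then (L, B, R) else (B, R, L))"

definition LRB :: "nat list \<Rightarrow> int \<times> int \<times> int" where
  "LRB z = foldl step (0, 1, 2) z"

definition omega :: "nat list \<Rightarrow> int" where
  "omega z = fst (LRB z)"

end

theory Submission
  imports Defs "HOL-Number_Theory.Cong"
begin

text \<open>Around every vertex the colours L, R, B form an arithmetic progression
  L, L + e, L + 2e in Z_3. Each step reverses the direction of the progression
  (e becomes -e), and only a right step changes the left colour, from L to
  B = L + 2e = L - e. Starting from (0, 1, 2) with e = 1, the left colour thus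
  accumulates the alternating sum of the letters.\<close>

definition progression_mod3 :: "int \<Rightarrow> int \<times> int \<times> int \<Rightarrow> bool" where
  "progression_mod3 e t \<longleftrightarrow>
     (case t of (L, R, B) \<Rightarrow> [R = L + e] (mod 3) \<and> [B = L + 2 * e] (mod 3))"

fun alternating_sum :: "nat list \<Rightarrow> int" where
  "alternating_sum [] = 0"
| "alternating_sum (x # xs) = int x - alternating_sum xs"

lemma alternating_sum_eq:
  "(\<Sum>i = 1..length xs. (-1) ^ i * int (xs ! (i - 1))) = - alternating_sum xs"
proof (induction xs)
  case Nil
  then show ?case by simp
next
  case (Cons x xs)
  have "(\<Sum>i = 1..Suc (length xs). (-1) ^ i * int ((x # xs) ! (i - 1)))
      = - int x + (\<Sum>i = 1..length xs. (-1) ^ Suc i * int ((x # xs) ! i))"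
    by (subst sum.atLeast_Suc_atMost)
      (simp_all add: sum.shift_bounds_cl_Suc_ivl del: sum.cl_ivl_Suc)
  also have "\<dots> = - int x + alternating_sum xs"
    using Cons.IH by (simp add: sum_negf)
  finally show ?case by simp
qed

lemma step_progression_mod3:
  assumes "progression_mod3 e t" and "a \<in> {0, 1}"
  shows "progression_mod3 (- e) (step t a)"
    and "[fst (step t a) = fst t - e * int a] (mod 3)"
proof -
  obtain L R B where t: "t = (L, R, B)" by (cases t) auto
  have R: "[R = L + e] (mod 3)" and B: "[B = L + 2 * e] (mod 3)"
    using assms(1) by (auto simp: progression_mod3_def t)
  have "[B = L + - e] (mod 3)" "[R = L + 2 * - e] (mod 3)"
    "[R = B + - e] (mod 3)" "[L = B + 2 * - e] (mod 3)"
    using R B by (simp_all add: cong_iff_dvd_diff) presburger+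
  then show "progression_mod3 (- e) (step t a)"
    and "[fst (step t a) = fst t - e * int a] (mod 3)"
    using assms(2) by (auto simp: progression_mod3_def t)
qed

lemma foldl_step_progression_mod3:
  assumes "progression_mod3 e t" and "set xs \<subseteq> {0, 1}"
  shows "[fst (foldl step t xs) = fst t - e * alternating_sum xs] (mod 3)"
  using assms
proof (induction xs arbitrary: e t)
  case Nil
  then show ?case by simp
next
  case (Cons x xs)
  then have x: "x \<in> {0, 1}" and xs: "set xs \<subseteq> {0, 1}" by auto
  have "[fst (foldl step t (x # xs)) = fst (step t x) + e * alternating_sum xs] (mod 3)"
    using Cons.IH[OF step_progression_mod3(1)[OF Cons.prems(1) x] xs] by simp
  also have "[fst (step t x) + e * alternating_sum xs
      = (fst t - e * int x) + e * alternating_sum xs] (mod 3)"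
    using step_progression_mod3(2)[OF Cons.prems(1) x] by (rule cong_add) simp
  finally show ?case by (simp add: algebra_simps)
qed

theorem proposition2p5:
  fixes a :: "nat list"
  assumes "set a \<subseteq> {0, 1}"
  shows "omega a mod 3 = (\<Sum>i = 1..length a. (-1) ^ i * int (a ! (i - 1))) mod 3"
proof -
  have "progression_mod3 1 (0, 1, 2)"
    by (simp add: progression_mod3_def)
  from foldl_step_progression_mod3[OF this assms]
  show ?thesis
    unfolding alternating_sum_eq by (simp add: omega_def LRB_def cong_def)
qed

end
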